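(* Let $M(1)^+_m$ denote the weight-$m$ subspace of $M(1)^+$. Then $M(1)^+_{10}$ (which has dimension 22) is spanned by the vectors in $$L(-1)M(1)^+_9,\qquad L(-3)M(1)^+_7,\qquad (h(-1)^4\mathbf 1)_{-3}\,h(-1)^4\mathbf 1,\qquad L(-2)^5\mathbf 1.$$
   Context: Let $\mathfrak h=\mathbb C h$ with $\langle h,h\rangle=1$, Heisenberg algebra $[h(m),h(n)]=m\delta_{m+n,0}$. Let $M(1)=\mathbb C[h(-1),h(-2),\dots]\mathbf 1$ be the Heisenberg vertex operator algebra of central charge 1 (vacuum $\mathbf 1$, $Y(h(-1)\mathbf 1,z)=\sum_nh(n)z^{-n-1}$, $Y(h(-n_1)\cdots h(-n_k)\mathbf 1,z)={:}\partial_z^{(n_1-1)}h(z)\cdots\partial_z^{(n_k-1)}h(z){:}$), with conformal vector $\omega=\frac12h(-1)^2\mathbf 1$, $Y(\omega,z)=\sum_nL(n)z^{-n-2}$, and weight of $h(-n_1)\cdots h(-n_k)\mathbf 1$ equal to $\sum n_i$. For $u\in M(1)$, $Y(u,z)=\sum_nu_nz^{-n-1}$. Let $\theta$ act by $(-1)^k$ on monomials of length $k$ and $M(1)^+$ be its fixed-point subalgebra (spanned by monomials of even length). *)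

theory Defs
  imports Complex_Main "HOL-Library.Multiset"
begin

text \<open>Model of the Heisenberg VOA M(1) = C[h(-1),h(-2),...]1 of central charge 1.
  A monomial h(-n_1)...h(-n_k)1 (all n_i >= 1) is the multiset {#n_1,...,n_k#};
  the vacuum is the empty multiset.\<close>

type_synonym mono = "nat multiset"
type_synonym vec = "mono \<Rightarrow> complex"

definition supp :: "vec \<Rightarrow> mono set" where
  "supp v = {a. v a \<noteq> 0}"

definition basis_vec :: "mono \<Rightarrow> vec" where
  "basis_vec a = (\<lambda>b. if b = a then 1 else 0)"

definition vacuum :: vec where
  "vacuum = basis_vec {#}"

definition wt :: "mono \<Rightarrow> nat" where
  "wt a = sum_mset a"

definition M1 :: "vec set" where
  "M1 = {v. finite (supp v) \<and> (\<forall>a \<in> supp v. 0 \<notin># a)}"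

definition M1plus_wt :: "nat \<Rightarrow> vec set" where
  "M1plus_wt m = {v \<in> M1. \<forall>a \<in> supp v. wt a = m \<and> even (size a)}"

definition cspan :: "vec set \<Rightarrow> vec set" where
  "cspan S = {v. \<exists>A c. finite A \<and> A \<subseteq> S \<and> v = (\<lambda>b. \<Sum>u\<in>A. c u * u b)}"

definition lin :: "(mono \<Rightarrow> vec) \<Rightarrow> vec \<Rightarrow> vec" where
  "lin f v = (\<lambda>b. \<Sum>a\<in>supp v. v a * f a b)"

text \<open>Heisenberg mode h(j) on a monomial: [h(m),h(n)] = m delta_{m+n,0}.
  h(-n) (n>0) multiplies by h(-n); h(n) (n>0) acts as n d/dh(-n); h(0) acts as 0.\<close>
definition hmode :: "int \<Rightarrow> mono \<Rightarrow> vec" where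
  "hmode j a =
     (if j < 0 then basis_vec (a + {# nat (- j) #})
      else if j = 0 then (\<lambda>_. 0)
      else (\<lambda>b. of_int j * of_nat (count a (nat j)) * basis_vec (a - {# nat j #}) b))"

definition apply_modes :: "int list \<Rightarrow> vec \<Rightarrow> vec" where
  "apply_modes js v = foldr (\<lambda>j w. lin (hmode j) w) js v"

text \<open>Normal-ordered product :h(j_1)...h(j_r): (annihilation modes j >= 0 to the right).\<close>
definition nprod :: "int list \<Rightarrow> vec \<Rightarrow> vec" where
  "nprod js v = apply_modes (filter (\<lambda>j. j < 0) js @ filter (\<lambda>j. 0 \<le> j) js) v"

text \<open>Tuples (j_1,...,j_k) with sum s that can act nontrivially on a monomial of weight w:
  every entry is <= w (a positive mode larger than w annihilates), hence every entry is
  >= s - k*w.  All other terms of the formal sum vanish.\<close>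
definition tuples :: "nat \<Rightarrow> int \<Rightarrow> nat \<Rightarrow> int list set" where
  "tuples k s w = {js. length js = k \<and> sum_list js = s \<and> set js \<subseteq> {s - int k * int w .. int w}}"

text \<open>Mode u_n of u = h(-1)^k 1:  Y(u,z) = :h(z)^k: = sum_n u_n z^{-n-1}, so
  u_n = sum_{j_1+...+j_k = n-k+1} :h(j_1)...h(j_k):.\<close>
definition hpow_mode :: "nat \<Rightarrow> int \<Rightarrow> vec \<Rightarrow> vec" where
  "hpow_mode k n = lin (\<lambda>a b. \<Sum>js\<in>tuples k (n - int k + 1) (wt a).
                          nprod js (basis_vec a) b)"

text \<open>Virasoro operators: omega = 1/2 h(-1)^2 1, L(n) = omega_{n+1}.\<close>
definition Lop :: "int \<Rightarrow> vec \<Rightarrow> vec" where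
  "Lop n v = (\<lambda>b. (1/2) * hpow_mode 2 (n + 1) v b)"

end

theory Submission
  imports Defs
begin

text \<open>Every mode h(j) shifts the weight of a monomial by -j and flips the parity of its length,
  so L(n) and the modes of h(-1)^4 1 map homogeneous vectors to homogeneous ones: the given vectors,
  and hence their span, lie in M(1)^+_10.  Conversely, M(1)^+_10 has as basis the 22 monomials
  h(-n_1)...h(-n_k)1 with k even and n_1 + ... + n_k = 10.  Twenty-two vectors of the given set,
  namely L(-1) applied to the 14 even monomials of weight 9, L(-3) applied to six of the seven
  even monomials of weight 7, (h(-1)^4 1)_{-3} h(-1)^4 1 and L(-2)^5 1, are expanded in this basis
  by running the modes on integer coefficient lists, and an integer matrix C with
  C M^T = 73728 I shows that their coefficient matrix M is invertible.\<close>

lemma supp_eq_empty_iff: "supp v = {} \<longleftrightarrow> v = (\<lambda>_. 0)"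
  by (auto simp: supp_def fun_eq_iff)

lemma supp_lincomb: "supp (\<lambda>b. \<Sum>i\<in>I. c i * g i b) \<subseteq> (\<Union>i\<in>I. supp (g i))"
proof
  fix b assume "b \<in> supp (\<lambda>b. \<Sum>i\<in>I. c i * g i b)"
  then obtain i where "i \<in> I" "c i * g i b \<noteq> 0"
    by (metis (mono_tags, lifting) mem_Collect_eq sum.neutral supp_def)
  then show "b \<in> (\<Union>i\<in>I. supp (g i))" by (auto simp: supp_def)
qed

lemma supp_lin: "supp (lin f v) \<subseteq> (\<Union>a\<in>supp v. supp (f a))"
  unfolding lin_def by (rule supp_lincomb)

lemma lin_zero: "lin f (\<lambda>_. 0) = (\<lambda>_. 0)"
  by (simp add: lin_def supp_def)

lemma lin_eq_zeroI: "(\<And>a. a \<in> supp v \<Longrightarrow> f a = (\<lambda>_. 0)) \<Longrightarrow> lin f v = (\<lambda>_. 0)"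
  by (simp add: lin_def)

lemma lin_scale: "lin f (\<lambda>b. c * v b) = (\<lambda>b. c * lin f v b)"
proof (cases "c = 0")
  case True
  then show ?thesis by (simp add: lin_def supp_def)
next
  case False
  then have "supp (\<lambda>b. c * v b) = supp v" by (simp add: supp_def)
  then show ?thesis by (simp add: lin_def sum_distrib_left mult.assoc)
qed

lemma apply_modes_Nil: "apply_modes [] v = v"
  by (simp add: apply_modes_def)

lemma apply_modes_Cons: "apply_modes (j # js) v = lin (hmode j) (apply_modes js v)"
  by (simp add: apply_modes_def)

lemma apply_modes_append: "apply_modes (xs @ ys) v = apply_modes xs (apply_modes ys v)"
  by (simp add: apply_modes_def)

lemma apply_modes_zero: "apply_modes js (\<lambda>_. 0) = (\<lambda>_. 0)"
  by (induction js) (simp_all add: apply_modes_Nil apply_modes_Cons lin_zero)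

lemma hmode_pos:
  "0 < j \<Longrightarrow> hmode j a = (\<lambda>b. of_int j * of_nat (count a (nat j)) * basis_vec (a - {#nat j#}) b)"
  by (simp add: hmode_def)

lemma Lop_scale: "Lop n (\<lambda>b. c * v b) = (\<lambda>b. c * Lop n v b)"
  by (simp add: Lop_def hpow_mode_def lin_scale)

section \<open>Weight and parity\<close>

definition homogeneous :: "int \<Rightarrow> bool \<Rightarrow> vec \<Rightarrow> bool" where
  "homogeneous w p v \<longleftrightarrow> v \<in> M1 \<and> (\<forall>a\<in>supp v. int (wt a) = w \<and> even (size a) = p)"

lemma M1plus_wt_iff_homogeneous: "v \<in> M1plus_wt m \<longleftrightarrow> homogeneous (int m) True v"
  by (auto simp: M1plus_wt_def homogeneous_def)

lemma homogeneous_zero: "homogeneous w p (\<lambda>_. 0)"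
  by (simp add: homogeneous_def M1_def supp_def)

lemma homogeneous_basis_vec: "0 \<notin># a \<Longrightarrow> homogeneous (wt a) (even (size a)) (basis_vec a)"
  by (auto simp: homogeneous_def M1_def supp_def basis_vec_def)

lemma homogeneous_lincomb:
  assumes "\<And>i. i \<in> I \<Longrightarrow> homogeneous w p (g i)"
  shows "homogeneous w p (\<lambda>b. \<Sum>i\<in>I. c i * g i b)"
proof (cases "finite I")
  case True
  let ?U = "\<Union>i\<in>I. supp (g i)"
  have sub: "supp (\<lambda>b. \<Sum>i\<in>I. c i * g i b) \<subseteq> ?U"
    by (rule supp_lincomb)
  have "\<And>i. i \<in> I \<Longrightarrow> finite (supp (g i))"
    using assms by (simp add: homogeneous_def M1_def)
  then have "finite ?U" using True by blast
  moreover have "\<And>a. a \<in> ?U \<Longrightarrow> 0 \<notin># a \<and> int (wt a) = w \<and> even (size a) = p"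
    using assms by (force simp: homogeneous_def M1_def)
  ultimately show ?thesis
    unfolding homogeneous_def M1_def using finite_subset[OF sub] sub by blast
qed (simp add: homogeneous_zero)

lemma homogeneous_scale: "homogeneous w p v \<Longrightarrow> homogeneous w p (\<lambda>b. c * v b)"
  using homogeneous_lincomb[of "{v}" w p "\<lambda>v. v" "\<lambda>_. c"] by simp

lemma homogeneous_sum:
  "(\<And>i. i \<in> I \<Longrightarrow> homogeneous w p (g i)) \<Longrightarrow> homogeneous w p (\<lambda>b. \<Sum>i\<in>I. g i b)"
  using homogeneous_lincomb[of I w p g "\<lambda>_. 1"] by simp

lemma homogeneous_lin:
  "(\<And>a. a \<in> supp v \<Longrightarrow> homogeneous w p (f a)) \<Longrightarrow> homogeneous w p (lin f v)"
  unfolding lin_def by (rule homogeneous_lincomb)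

lemma homogeneous_hmode:
  assumes "0 \<notin># a"
  shows "homogeneous (int (wt a) - j) (odd (size a)) (hmode j a)"
proof -
  consider "j < 0" | "j = 0" | "0 < j" "nat j \<notin># a" | "0 < j" "nat j \<in># a"
    by fastforce
  then show ?thesis
  proof cases
    case 1
    then have "0 \<notin># a + {#nat (- j)#}" using assms by auto
    from homogeneous_basis_vec[OF this] show ?thesis
      using 1 by (simp add: hmode_def wt_def)
  next
    case 2
    then show ?thesis by (simp add: hmode_def homogeneous_zero)
  next
    case 3
    then show ?thesis by (simp add: hmode_def not_in_iff homogeneous_zero)
  next
    case 4
    then obtain r where a: "a = add_mset (nat j) r" by (metis insert_DiffM)
    have r: "0 \<notin># r" using assms a by simp
    have w: "int (wt r) = int (wt a) - j" using 4 a by (simp add: wt_def)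
    have s: "even (size r) = odd (size a)" using a by simp
    have "a - {#nat j#} = r" using a by simp
    then have "hmode j a = (\<lambda>b. (of_int j * of_nat (count a (nat j))) * basis_vec r b)"
      by (simp only: hmode_pos[OF \<open>0 < j\<close>] mult.assoc)
    then show ?thesis
      using homogeneous_scale[OF homogeneous_basis_vec[OF r]] by (simp only: w s)
  qed
qed

lemma homogeneous_lin_hmode:
  assumes "homogeneous w p v"
  shows "homogeneous (w - j) (\<not> p) (lin (hmode j) v)"
proof (rule homogeneous_lin)
  fix a assume "a \<in> supp v"
  then have "0 \<notin># a" "int (wt a) = w" "even (size a) = p"
    using assms by (auto simp: homogeneous_def M1_def)
  then show "homogeneous (w - j) (\<not> p) (hmode j a)"
    using homogeneous_hmode[of a j] by simp
qed

lemma homogeneous_apply_modes: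
  assumes "homogeneous w p v"
  shows "homogeneous (w - sum_list js) (p = even (length js)) (apply_modes js v)"
proof (induction js)
  case Nil
  then show ?case using assms by (simp add: apply_modes_Nil)
next
  case (Cons j js)
  from homogeneous_lin_hmode[OF this, of j] show ?case
    by (simp add: apply_modes_Cons algebra_simps)
qed

lemma mset_normal_order: "mset (filter (\<lambda>j::int. j < 0) js @ filter (\<lambda>j. 0 \<le> j) js) = mset js"
  by (induction js) auto

lemma homogeneous_nprod:
  assumes "homogeneous w p v"
  shows "homogeneous (w - sum_list js) (p = even (length js)) (nprod js v)"
proof -
  let ?ks = "filter (\<lambda>j. j < 0) js @ filter (\<lambda>j. 0 \<le> j) js"
  have "sum_list ?ks = sum_list js" "length ?ks = length js"
    by (metis mset_normal_order sum_mset_sum_list, metis mset_normal_order size_mset)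
  then show ?thesis
    using homogeneous_apply_modes[OF assms, of ?ks] by (simp add: nprod_def)
qed

lemma homogeneous_hpow_mode:
  assumes "homogeneous w p v"
  shows "homogeneous (w - (n - int k + 1)) (p = even k) (hpow_mode k n v)"
  unfolding hpow_mode_def
proof (rule homogeneous_lin)
  fix a assume "a \<in> supp v"
  then have "0 \<notin># a" "int (wt a) = w" "even (size a) = p"
    using assms by (auto simp: homogeneous_def M1_def)
  then have "homogeneous w p (basis_vec a)"
    using homogeneous_basis_vec[of a] by simp
  then have "homogeneous (w - (n - int k + 1)) (p = even k) (nprod js (basis_vec a))"
    if "js \<in> tuples k (n - int k + 1) (wt a)" for js
    using homogeneous_nprod[of w p "basis_vec a" js] that by (simp add: tuples_def)
  then show "homogeneous (w - (n - int k + 1)) (p = even k)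
               (\<lambda>b. \<Sum>js\<in>tuples k (n - int k + 1) (wt a). nprod js (basis_vec a) b)"
    by (rule homogeneous_sum)
qed

lemma homogeneous_Lop:
  assumes "homogeneous w p v"
  shows "homogeneous (w - n) p (Lop n v)"
  unfolding Lop_def
proof (rule homogeneous_scale)
  show "homogeneous (w - n) p (hpow_mode 2 (n + 1) v)"
    using homogeneous_hpow_mode[OF assms, of "n + 1" 2] by simp
qed

lemma homogeneous_Lop_pow_vacuum: "homogeneous (- int j * n) True ((Lop n ^^ j) vacuum)"
proof (induction j)
  case 0
  show ?case using homogeneous_basis_vec[of "{#}"] by (simp add: vacuum_def wt_def)
next
  case (Suc j)
  have "homogeneous (- int j * n - n) True (Lop n ((Lop n ^^ j) vacuum))"
    by (rule homogeneous_Lop[OF Suc.IH])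
  moreover have "- int (Suc j) * n = - int j * n - n" by (simp add: algebra_simps)
  ultimately show ?case by (metis comp_apply funpow.simps(2))
qed

section \<open>Annihilation modes\<close>

lemma supp_hmode_nonneg:
  assumes "0 \<le> j" "b \<in> supp (hmode j a)"
  shows "0 < j \<and> nat j \<in># a \<and> b = a - {#nat j#}"
proof (cases "j = 0")
  case True
  with assms(2) show ?thesis by (simp add: hmode_def supp_def)
next
  case False
  with assms show ?thesis
    by (auto simp: hmode_pos supp_def basis_vec_def not_in_iff split: if_splits)
qed

lemma supp_apply_annihilators:
  "\<forall>j\<in>set P. 0 \<le> j \<Longrightarrow> b \<in> supp (apply_modes P (basis_vec a)) \<Longrightarrow> set_mset b \<subseteq> set_mset a"
proof (induction P arbitrary: b)
  case Nil
  then show ?case by (simp add: apply_modes_Nil supp_def basis_vec_def split: if_splits)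
next
  case (Cons j P)
  then obtain c where c: "c \<in> supp (apply_modes P (basis_vec a))" "b \<in> supp (hmode j c)"
    using supp_lin[of "hmode j" "apply_modes P (basis_vec a)"] by (auto simp: apply_modes_Cons)
  then have "set_mset c \<subseteq> set_mset a" using Cons by simp
  moreover have "b = c - {#nat j#}" using supp_hmode_nonneg[OF _ c(2)] Cons.prems(1) by simp
  ultimately show ?case by (auto dest: in_diffD)
qed

lemma apply_annihilators_eq_zero:
  assumes "\<forall>j\<in>set P. 0 \<le> j" "j0 \<in> set P" "j0 = 0 \<or> nat j0 \<notin># a"
  shows "apply_modes P (basis_vec a) = (\<lambda>_. 0)"
  using assms
proof (induction P)
  case Nil
  then show ?case by simp
next
  case (Cons j P)
  show ?case
  proof (cases "j0 \<in> set P")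
    case True
    then show ?thesis using Cons by (simp add: apply_modes_Cons lin_zero)
  next
    case False
    then have "j0 = j" using Cons.prems(2) by simp
    have "hmode j c = (\<lambda>_. 0)" if "c \<in> supp (apply_modes P (basis_vec a))" for c
    proof -
      have "set_mset c \<subseteq> set_mset a"
        using supp_apply_annihilators[OF _ that] Cons.prems(1) by simp
      then have "supp (hmode j c) = {}"
        using Cons.prems \<open>j0 = j\<close> supp_hmode_nonneg[of j _ c] by fastforce
      then show ?thesis by (simp add: supp_eq_empty_iff)
    qed
    then show ?thesis by (simp add: apply_modes_Cons lin_eq_zeroI)
  qed
qed

lemma nprod_basis_vec_eq_zero:
  assumes "j \<in> set js" "0 \<le> j" "j = 0 \<or> nat j \<notin># a"
  shows "nprod js (basis_vec a) = (\<lambda>_. 0)"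
  using apply_annihilators_eq_zero[of "filter (\<lambda>j. 0 \<le> j) js" j a] assms
  by (simp add: nprod_def apply_modes_append apply_modes_zero)

section \<open>Spans\<close>

lemma cspan_lincomb:
  assumes "finite I" "\<And>i. i \<in> I \<Longrightarrow> g i \<in> cspan S"
  shows "(\<lambda>b. \<Sum>i\<in>I. d i * g i b) \<in> cspan S"
proof -
  have "\<forall>i\<in>I. \<exists>A c. finite A \<and> A \<subseteq> S \<and> g i = (\<lambda>b. \<Sum>u\<in>A. c u * u b)"
    using assms(2) by (simp add: cspan_def)
  then have "\<exists>A. \<forall>i\<in>I. \<exists>c. finite (A i) \<and> A i \<subseteq> S \<and> g i = (\<lambda>b. \<Sum>u\<in>A i. c u * u b)"
    by (rule bchoice)
  then obtain A where "\<forall>i\<in>I. \<exists>c. finite (A i) \<and> A i \<subseteq> S \<and> g i = (\<lambda>b. \<Sum>u\<in>A i. c u * u b)" ..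
  then have "\<exists>c. \<forall>i\<in>I. finite (A i) \<and> A i \<subseteq> S \<and> g i = (\<lambda>b. \<Sum>u\<in>A i. c i u * u b)"
    by (rule bchoice)
  then obtain c where Ac: "\<forall>i\<in>I. finite (A i) \<and> A i \<subseteq> S \<and> g i = (\<lambda>b. \<Sum>u\<in>A i. c i u * u b)" ..
  define B where "B = (\<Union>i\<in>I. A i)"
  define e where "e u = (\<Sum>i\<in>I. if u \<in> A i then d i * c i u else 0)" for u
  have "finite B" "B \<subseteq> S" using Ac assms(1) by (auto simp: B_def)
  have "(\<Sum>i\<in>I. d i * g i b) = (\<Sum>u\<in>B. e u * u b)" for b
  proof -
    have "(\<Sum>i\<in>I. d i * g i b) = (\<Sum>i\<in>I. \<Sum>u\<in>B. if u \<in> A i then d i * c i u * u b else 0)"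
    proof (rule sum.cong[OF refl])
      fix i assume i: "i \<in> I"
      then have "A i \<subseteq> B" by (auto simp: B_def)
      then have "(\<Sum>u\<in>B. if u \<in> A i then d i * c i u * u b else 0) = (\<Sum>u\<in>A i. d i * c i u * u b)"
        using \<open>finite B\<close> by (simp add: sum.inter_restrict[symmetric] Int_absorb1)
      then show "d i * g i b = (\<Sum>u\<in>B. if u \<in> A i then d i * c i u * u b else 0)"
        using bspec[OF Ac i] by (simp add: sum_distrib_left mult.assoc)
    qed
    also have "\<dots> = (\<Sum>u\<in>B. e u * u b)"
      by (subst sum.swap) (auto simp: e_def sum_distrib_right intro!: sum.cong)
    finally show ?thesis .
  qed
  with \<open>finite B\<close> \<open>B \<subseteq> S\<close> show ?thesis
    unfolding cspan_def by (intro CollectI exI[of _ B] exI[of _ e]) auto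
qed

lemma cspan_scale_mem: "u \<in> S \<Longrightarrow> (\<lambda>b. d * u b) \<in> cspan S"
  unfolding cspan_def by (rule CollectI, rule exI[of _ "{u}"], rule exI[of _ "\<lambda>_. d"]) simp

lemma cspan_superset: "u \<in> S \<Longrightarrow> u \<in> cspan S"
  using cspan_scale_mem[of u S 1] by simp

lemma cspan_subset_M1plus_wt:
  assumes "S \<subseteq> M1plus_wt m"
  shows "cspan S \<subseteq> M1plus_wt m"
proof
  fix v assume "v \<in> cspan S"
  then obtain A c where "A \<subseteq> S" "v = (\<lambda>b. \<Sum>u\<in>A. c u * u b)"
    by (auto simp: cspan_def)
  with assms have "\<And>u. u \<in> A \<Longrightarrow> homogeneous (int m) True u"
    by (auto simp: M1plus_wt_iff_homogeneous)
  with \<open>v = _\<close> show "v \<in> M1plus_wt m"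
    by (simp add: M1plus_wt_iff_homogeneous homogeneous_lincomb)
qed

lemma M1plus_wt_subset_cspan:
  assumes "\<And>a. 0 \<notin># a \<Longrightarrow> wt a = m \<Longrightarrow> even (size a) \<Longrightarrow> basis_vec a \<in> cspan S"
  shows "M1plus_wt m \<subseteq> cspan S"
proof
  fix v assume v: "v \<in> M1plus_wt m"
  then have "finite (supp v)" "\<And>a. a \<in> supp v \<Longrightarrow> basis_vec a \<in> cspan S"
    using assms by (auto simp: M1plus_wt_def M1_def)
  then have "(\<lambda>b. \<Sum>a\<in>supp v. v a * basis_vec a b) \<in> cspan S"
    by (rule cspan_lincomb)
  moreover have "(\<Sum>a\<in>supp v. v a * basis_vec a b) = v b" for b
  proof -
    have "(\<Sum>a\<in>supp v. v a * basis_vec a b) = (\<Sum>a\<in>supp v. if a = b then v b else 0)"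
      by (rule sum.cong) (auto simp: basis_vec_def)
    also have "\<dots> = v b"
      using \<open>finite (supp v)\<close> by (simp add: sum.delta' supp_def)
    finally show ?thesis .
  qed
  ultimately show "v \<in> cspan S" by simp
qed

lemma eq_sum_of_left_inverse:
  fixes M C :: "nat \<Rightarrow> nat \<Rightarrow> 'a::field"
  assumes g: "\<And>i. i < n \<Longrightarrow> g i = (\<lambda>b. \<Sum>j<n. M j i * e j b)"
    and CM: "\<And>j. j < n \<Longrightarrow> (\<Sum>i<n. C q i * M j i) = (if j = q then D else 0)"
    and "D \<noteq> 0" "q < n"
  shows "e q = (\<lambda>b. \<Sum>i<n. C q i / D * g i b)"
proof
  fix b
  have "(\<Sum>i<n. C q i * g i b) = (\<Sum>i<n. \<Sum>j<n. C q i * M j i * e j b)"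
    by (simp add: g sum_distrib_left mult.assoc)
  also have "\<dots> = (\<Sum>j<n. (\<Sum>i<n. C q i * M j i) * e j b)"
    by (subst sum.swap) (simp add: sum_distrib_right)
  also have "\<dots> = (\<Sum>j<n. if j = q then D * e j b else 0)"
    by (rule sum.cong) (simp_all add: CM)
  also have "\<dots> = D * e q b"
    using \<open>q < n\<close> by simp
  finally show "e q b = (\<Sum>i<n. C q i / D * g i b)"
    using \<open>D \<noteq> 0\<close> by (simp add: sum_divide_distrib[symmetric] field_simps)
qed

section \<open>Integer coefficient lists\<close>

text \<open>A vector with integer coefficients is a list of (monomial, coefficient) pairs. A monomial is
  given by any list of its parts, and repeated monomials add up.\<close>

type_synonym coeffs = "(nat list \<times> int) list"

definition vec_of :: "coeffs \<Rightarrow> vec" where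
  "vec_of xs = (\<lambda>b. \<Sum>(l, c)\<leftarrow>xs. if mset l = b then of_int c else 0)"

lemma vec_of_Nil [simp]: "vec_of [] = (\<lambda>_. 0)"
  by (simp add: vec_of_def)

lemma vec_of_Cons: "vec_of ((l, c) # xs) b = (if mset l = b then of_int c else 0) + vec_of xs b"
  by (simp add: vec_of_def)

lemma vec_of_append: "vec_of (xs @ ys) b = vec_of xs b + vec_of ys b"
  by (simp add: vec_of_def)

lemma vec_of_concat: "vec_of (concat xss) b = (\<Sum>xs\<leftarrow>xss. vec_of xs b)"
  by (induction xss) (simp_all add: vec_of_append)

lemma vec_of_scale: "vec_of (map (\<lambda>(m, d). (m, c * d)) xs) b = of_int c * vec_of xs b"
  by (induction xs) (auto simp: vec_of_Cons algebra_simps)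

lemma basis_vec_mset: "basis_vec (mset l) = vec_of [(l, 1)]"
  by (auto simp: vec_of_def basis_vec_def)

lemma supp_vec_of: "supp (vec_of xs) \<subseteq> mset ` fst ` set xs"
proof
  fix b assume "b \<in> supp (vec_of xs)"
  then have "vec_of xs b \<noteq> 0" by (simp add: supp_def)
  then show "b \<in> mset ` fst ` set xs"
    by (induction xs) (auto simp: vec_of_Cons split: if_splits)
qed

lemma sum_vec_of_mult:
  assumes "finite S" "mset ` fst ` set xs \<subseteq> S"
  shows "(\<Sum>a\<in>S. vec_of xs a * g a) = (\<Sum>(l, c)\<leftarrow>xs. of_int c * g (mset l))"
  using assms(2)
proof (induction xs)
  case Nil
  then show ?case by simp
next
  case (Cons x xs)
  obtain l c where x: "x = (l, c)" by fastforce
  have "(\<Sum>a\<in>S. vec_of (x # xs) a * g a)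
      = (\<Sum>a\<in>S. if mset l = a then of_int c * g a else 0) + (\<Sum>a\<in>S. vec_of xs a * g a)"
    unfolding sum.distrib[symmetric] by (rule sum.cong) (auto simp: x vec_of_Cons distrib_right)
  also have "(\<Sum>a\<in>S. if mset l = a then of_int c * g a else 0) = of_int c * g (mset l)"
    using Cons.prems x assms(1) by (simp add: sum.delta)
  finally show ?case using Cons by (simp add: x)
qed

definition lin_coeffs :: "(nat list \<Rightarrow> coeffs) \<Rightarrow> coeffs \<Rightarrow> coeffs" where
  "lin_coeffs F xs = concat (map (\<lambda>(l, c). map (\<lambda>(m, d). (m, c * d)) (F l)) xs)"

lemma vec_of_lin_coeffs: "vec_of (lin_coeffs F xs) b = (\<Sum>(l, c)\<leftarrow>xs. of_int c * vec_of (F l) b)"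
  by (induction xs) (auto simp: lin_coeffs_def vec_of_append vec_of_scale)

lemma lin_vec_of:
  assumes "\<And>l. f (mset l) = vec_of (F l)"
  shows "lin f (vec_of xs) = vec_of (lin_coeffs F xs)"
proof
  fix b
  have "lin f (vec_of xs) b = (\<Sum>a\<in>mset ` fst ` set xs. vec_of xs a * f a b)"
    unfolding lin_def using supp_vec_of[of xs] by (intro sum.mono_neutral_left) (auto simp: supp_def)
  also have "\<dots> = (\<Sum>(l, c)\<leftarrow>xs. of_int c * f (mset l) b)"
    by (rule sum_vec_of_mult) auto
  also have "\<dots> = vec_of (lin_coeffs F xs) b"
    by (simp add: vec_of_lin_coeffs assms)
  finally show "lin f (vec_of xs) b = vec_of (lin_coeffs F xs) b" .
qed

definition hmode_coeffs :: "int \<Rightarrow> nat list \<Rightarrow> coeffs" where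
  "hmode_coeffs j l =
     (if j < 0 then [(insort (nat (- j)) l, 1)]
      else if j = 0 \<or> count_list l (nat j) = 0 then []
      else [(remove1 (nat j) l, j * int (count_list l (nat j)))])"

lemma hmode_mset: "hmode j (mset l) = vec_of (hmode_coeffs j l)"
  by (auto simp: hmode_def hmode_coeffs_def vec_of_def basis_vec_def count_mset fun_eq_iff)

definition apply_modes_coeffs :: "int list \<Rightarrow> coeffs \<Rightarrow> coeffs" where
  "apply_modes_coeffs js xs = foldr (\<lambda>j. lin_coeffs (hmode_coeffs j)) js xs"

lemma apply_modes_vec_of: "apply_modes js (vec_of xs) = vec_of (apply_modes_coeffs js xs)"
  by (induction js)
     (simp_all add: apply_modes_Nil apply_modes_Cons apply_modes_coeffs_def lin_vec_of hmode_mset)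

definition nprod_coeffs :: "int list \<Rightarrow> coeffs \<Rightarrow> coeffs" where
  "nprod_coeffs js = apply_modes_coeffs (filter (\<lambda>j. j < 0) js @ filter (\<lambda>j. 0 \<le> j) js)"

lemma nprod_vec_of: "nprod js (vec_of xs) = vec_of (nprod_coeffs js xs)"
  by (simp add: nprod_def nprod_coeffs_def apply_modes_vec_of)

fun tuples_with_sum :: "int \<Rightarrow> int \<Rightarrow> int list \<Rightarrow> nat \<Rightarrow> int \<Rightarrow> int list list" where
  "tuples_with_sum lo hi E 0 s = (if s = 0 then [[]] else [])"
| "tuples_with_sum lo hi E (Suc k) s =
     concat (map (\<lambda>e. map ((#) e) (tuples_with_sum lo hi E k (s - e)))
       (filter (\<lambda>e. int k * lo \<le> s - e \<and> s - e \<le> int k * hi) E))"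

lemma sum_list_bounds:
  "set js \<subseteq> {lo..hi} \<Longrightarrow> int (length js) * lo \<le> sum_list js \<and> sum_list js \<le> int (length js) * hi"
  by (induction js) (auto simp: algebra_simps)

lemma set_tuples_with_sum:
  assumes "set E \<subseteq> {lo..hi}"
  shows "set (tuples_with_sum lo hi E k s) = {js. length js = k \<and> sum_list js = s \<and> set js \<subseteq> set E}"
proof (induction k arbitrary: s)
  case 0
  then show ?case by auto
next
  case (Suc k)
  show ?case
  proof (intro set_eqI iffI)
    fix js assume "js \<in> set (tuples_with_sum lo hi E (Suc k) s)"
    then show "js \<in> {js. length js = Suc k \<and> sum_list js = s \<and> set js \<subseteq> set E}"
      using Suc by auto
  next
    fix js assume "js \<in> {js. length js = Suc k \<and> sum_list js = s \<and> set js \<subseteq> set E}"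
    then obtain e js' where js: "js = e # js'" "length js' = k" "e \<in> set E" "set js' \<subseteq> set E"
      "sum_list js' = s - e"
      by (cases js) auto
    then have "int k * lo \<le> s - e \<and> s - e \<le> int k * hi"
      using sum_list_bounds[of js' lo hi] assms by auto
    then show "js \<in> set (tuples_with_sum lo hi E (Suc k) s)"
      using js Suc by auto
  qed
qed

text \<open>Only tuples whose nonnegative entries are parts of l can contribute (the others are
  annihilated, lemma nprod_basis_vec_eq_zero), so only these are enumerated.\<close>

definition hpow_mode_coeffs :: "nat \<Rightarrow> int \<Rightarrow> nat list \<Rightarrow> coeffs" where
  "hpow_mode_coeffs k n l =
     (let s = n - int k + 1; w = int (sum_list l); lo = s - int k * w;
          E = [lo..-1] @ filter (\<lambda>j. 0 < j \<and> lo \<le> j \<and> j \<le> w) (map int (remdups l))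
      in concat (map (\<lambda>js. nprod_coeffs js [(l, 1)]) (remdups (tuples_with_sum lo w E k s))))"

lemma hpow_mode_coeffs_correct:
  "(\<lambda>b. \<Sum>js\<in>tuples k (n - int k + 1) (wt (mset l)). nprod js (basis_vec (mset l)) b)
   = vec_of (hpow_mode_coeffs k n l)"
proof
  fix b
  define s where "s = n - int k + 1"
  define w where "w = sum_list l"
  define lo where "lo = s - int k * int w"
  define E where "E = [lo..-1] @ filter (\<lambda>j. 0 < j \<and> lo \<le> j \<and> j \<le> int w) (map int (remdups l))"
  let ?T = "set (tuples_with_sum lo (int w) E k s)"
  have wt: "wt (mset l) = w" by (simp add: wt_def w_def sum_mset_sum_list)
  have T: "?T = {js. length js = k \<and> sum_list js = s \<and> set js \<subseteq> set E}"
    by (rule set_tuples_with_sum) (auto simp: E_def)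
  have sub: "?T \<subseteq> tuples k s w"
    unfolding T tuples_def lo_def[symmetric] by (auto simp: E_def)
  have fin: "finite (tuples k s w)"
    by (rule finite_subset[OF _ finite_lists_length_eq[of "{s - int k * int w..int w}" k]])
       (auto simp: tuples_def)
  have "nprod js (basis_vec (mset l)) = (\<lambda>_. 0)" if js: "js \<in> tuples k s w - ?T" for js
  proof -
    from js obtain j where j: "j \<in> set js" "j \<notin> set E" "lo \<le> j" "j \<le> int w"
      unfolding T tuples_def lo_def[symmetric] by (auto simp: subset_iff)
    then have "0 \<le> j" "j = 0 \<or> nat j \<notin># mset l"
      by (auto simp: E_def image_iff)
    with j(1) show ?thesis by (rule nprod_basis_vec_eq_zero)
  qed
  then have "(\<Sum>js\<in>tuples k s w. nprod js (basis_vec (mset l)) b)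
           = (\<Sum>js\<in>?T. nprod js (basis_vec (mset l)) b)"
    by (intro sum.mono_neutral_right[OF fin sub]) auto
  also have "\<dots> = vec_of (hpow_mode_coeffs k n l) b"
    by (simp add: sum.set_conv_list hpow_mode_coeffs_def Let_def s_def w_def lo_def E_def
                  vec_of_concat basis_vec_mset nprod_vec_of o_def)
  finally show "(\<Sum>js\<in>tuples k (n - int k + 1) (wt (mset l)). nprod js (basis_vec (mset l)) b)
              = vec_of (hpow_mode_coeffs k n l) b"
    by (simp add: s_def wt)
qed

lemma hpow_mode_vec_of: "hpow_mode k n (vec_of xs) = vec_of (lin_coeffs (hpow_mode_coeffs k n) xs)"
  unfolding hpow_mode_def by (rule lin_vec_of) (simp add: hpow_mode_coeffs_correct)

lemma hpow_mode_basis_vec: "hpow_mode k n (basis_vec (mset l)) = vec_of (hpow_mode_coeffs k n l)"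
  by (simp add: basis_vec_mset hpow_mode_vec_of fun_eq_iff vec_of_lin_coeffs)

lemma Lop_vec_of: "Lop n (vec_of xs) = (\<lambda>b. 1/2 * vec_of (lin_coeffs (hpow_mode_coeffs 2 (n + 1)) xs) b)"
  by (simp add: Lop_def hpow_mode_vec_of)

lemma Lop_pow_vacuum:
  "(Lop n ^^ j) vacuum
   = (\<lambda>b. (1/2) ^ j * vec_of ((lin_coeffs (hpow_mode_coeffs 2 (n + 1)) ^^ j) [([], 1)]) b)"
proof (induction j)
  case 0
  show ?case by (simp add: vacuum_def basis_vec_mset[of "[]", simplified])
next
  case (Suc j)
  show ?case by (simp add: Suc Lop_scale Lop_vec_of)
qed

definition coord :: "coeffs \<Rightarrow> nat list \<Rightarrow> int" where
  "coord xs p = (\<Sum>(l, c)\<leftarrow>xs. if l = p then c else 0)"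

lemma vec_of_expand:
  assumes "distinct ps" "fst ` set xs \<subseteq> set ps"
  shows "vec_of xs b = (\<Sum>j<length ps. of_int (coord xs (ps ! j)) * basis_vec (mset (ps ! j)) b)"
proof -
  have "vec_of xs b = (\<Sum>p\<leftarrow>ps. of_int (coord xs p) * vec_of [(p, 1)] b)"
    using assms(2)
  proof (induction xs)
    case Nil
    then show ?case by (simp add: coord_def)
  next
    case (Cons x xs)
    obtain l c where x: "x = (l, c)" by fastforce
    have "l \<in> set ps" using Cons.prems x by auto
    have "(\<Sum>p\<leftarrow>ps. of_int (coord (x # xs) p) * vec_of [(p, 1)] b)
        = (\<Sum>p\<leftarrow>ps. if l = p then of_int c * vec_of [(p, 1)] b else 0)
          + (\<Sum>p\<leftarrow>ps. of_int (coord xs p) * vec_of [(p, 1)] b)"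
      unfolding sum_list_addf[symmetric]
      by (intro arg_cong[where f = sum_list] map_cong) (auto simp: x coord_def distrib_right)
    also have "(\<Sum>p\<leftarrow>ps. if l = p then of_int c * vec_of [(p, 1)] b else 0) = of_int c * vec_of [(l, 1)] b"
      using \<open>l \<in> set ps\<close> assms(1) by (simp add: sum_list_distinct_conv_sum_set sum.delta)
    finally show ?case using Cons by (simp add: x vec_of_Cons)
  qed
  then show ?thesis
    by (simp add: sum_list_sum_nth atLeast0LessThan basis_vec_mset)
qed

section \<open>Partitions\<close>

fun partitions :: "nat \<Rightarrow> nat \<Rightarrow> nat list list" where
  "partitions 0 m = [[]]"
| "partitions (Suc n) m =
     concat (map (\<lambda>k. map ((#) k) (partitions (Suc n - k) k)) [max 1 m..<Suc (Suc n)])"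

lemma partitions_sound: "l \<in> set (partitions n m) \<Longrightarrow> sum_list l = n \<and> 0 \<notin> set l"
proof (induction n m arbitrary: l rule: partitions.induct)
  case (2 n m)
  then obtain k l' where k: "k \<in> set [max 1 m..<Suc (Suc n)]"
    and l: "l = k # l'" "l' \<in> set (partitions (Suc n - k) k)"
    by auto
  have "sum_list l' = Suc n - k \<and> 0 \<notin> set l'" using k l(2) by (rule "2.IH")
  with k l show ?case by auto
qed simp

lemma partitions_complete:
  "\<forall>x\<in>#a. m \<le> x \<and> 0 < x \<Longrightarrow> sum_mset a = n \<Longrightarrow> \<exists>l\<in>set (partitions n m). mset l = a"
proof (induction n arbitrary: a m rule: less_induct)
  case (less n)
  show ?case
  proof (cases "a = {#}")
    case True
    then show ?thesis using less.prems(2) by simp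
  next
    case False
    define k where "k = Min (set_mset a)"
    have "k \<in># a" "\<forall>x\<in>#a. k \<le> x" using False by (simp_all add: k_def)
    define a' where "a' = a - {#k#}"
    have a: "a = add_mset k a'" using \<open>k \<in># a\<close> by (simp add: a'_def)
    have k: "0 < k" "m \<le> k" using less.prems(1) \<open>k \<in># a\<close> by auto
    have sum: "sum_mset a' = n - k" and "k \<le> n" using less.prems(2) unfolding a by auto
    have pos: "\<forall>x\<in>#a'. k \<le> x \<and> 0 < x"
      using \<open>\<forall>x\<in>#a. k \<le> x\<close> less.prems(1) unfolding a by auto
    have "n - k < n" using k \<open>k \<le> n\<close> by simp
    from less.IH[OF this pos sum] obtain l' where l': "l' \<in> set (partitions (n - k) k)" "mset l' = a'"
      by blast
    obtain n0 where n0: "n = Suc n0" using \<open>k \<le> n\<close> k by (cases n) auto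
    have "k \<in> set [max 1 m..<Suc (Suc n0)]" using k \<open>k \<le> n\<close> n0 by auto
    moreover have "k # l' \<in> set (map ((#) k) (partitions (Suc n0 - k) k))"
      using l'(1) n0 by simp
    ultimately have "k # l' \<in> set (partitions n m)"
      unfolding n0 partitions.simps(2) set_concat set_map[of _ "[max 1 m..<Suc (Suc n0)]"] by blast
    moreover have "mset (k # l') = a" using l' a by simp
    ultimately show ?thesis by blast
  qed
qed

definition even_partitions :: "nat \<Rightarrow> nat list list" where
  "even_partitions n = filter (\<lambda>l. even (length l)) (partitions n 1)"

lemma basis_vec_even_partition:
  "l \<in> set (even_partitions n) \<Longrightarrow> basis_vec (mset l) \<in> M1plus_wt n"
  using partitions_sound[of l n 1] homogeneous_basis_vec[of "mset l"]
  by (simp add: even_partitions_def M1plus_wt_iff_homogeneous wt_def sum_mset_sum_list)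

lemma even_partition_exists:
  assumes "0 \<notin># a" "wt a = n" "even (size a)"
  shows "\<exists>l\<in>set (even_partitions n). mset l = a"
proof -
  have "\<forall>x\<in>#a. 1 \<le> x \<and> 0 < x" using assms(1) by (metis One_nat_def Suc_leI gr0I)
  then obtain l where "l \<in> set (partitions n 1)" "mset l = a"
    using partitions_complete[of a 1 n] assms(2) by (auto simp: wt_def)
  with assms(3) show ?thesis by (auto simp: even_partitions_def)
qed

section \<open>Weight 10\<close>

definition weight10_generators :: "vec set" where
  "weight10_generators = Lop (-1) ` M1plus_wt 9 \<union> Lop (-3) ` M1plus_wt 7
     \<union> {hpow_mode 4 (-3) (basis_vec {#1,1,1,1#}), (Lop (-2) ^^ 5) vacuum}"

lemma weight10_generators_subset: "weight10_generators \<subseteq> M1plus_wt 10"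
proof -
  have "Lop (-1) v \<in> M1plus_wt 10" if "v \<in> M1plus_wt 9" for v
    using homogeneous_Lop[of 9 True v "-1"] that by (simp add: M1plus_wt_iff_homogeneous)
  moreover have "Lop (-3) v \<in> M1plus_wt 10" if "v \<in> M1plus_wt 7" for v
    using homogeneous_Lop[of 7 True v "-3"] that by (simp add: M1plus_wt_iff_homogeneous)
  moreover have "hpow_mode 4 (-3) (basis_vec {#1,1,1,1#}) \<in> M1plus_wt 10"
    using homogeneous_hpow_mode[OF homogeneous_basis_vec[of "{#1,1,1,1#}"], of "-3" 4]
    by (simp add: M1plus_wt_iff_homogeneous wt_def)
  moreover have "(Lop (-2) ^^ 5) vacuum \<in> M1plus_wt 10"
    using homogeneous_Lop_pow_vacuum[of 5 "-2"] by (simp add: M1plus_wt_iff_homogeneous)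
  ultimately show ?thesis by (auto simp: weight10_generators_def)
qed

text \<open>Coefficient lists of 2 L(-1) v and 2 L(-3) v' for even monomials v of weight 9 and v' of
  weight 7, of (h(-1)^4 1)_{-3} h(-1)^4 1, and of 32 L(-2)^5 1.  The weight-7 monomial h(-1)h(-6)1
  is left out, which leaves 22 generators.\<close>

definition generator_coeffs :: "coeffs list" where
  "generator_coeffs =
     map (hpow_mode_coeffs 2 0) (even_partitions 9)
     @ map (hpow_mode_coeffs 2 (-2)) [[1,1,1,1,1,2], [1,2,2,2], [1,1,2,3], [1,1,1,4], [3,4], [2,5]]
     @ [hpow_mode_coeffs 4 (-3) [1,1,1,1], (lin_coeffs (hpow_mode_coeffs 2 (-1)) ^^ 5) [([], 1)]]"

lemma generator_coeffs_in_cspan: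
  assumes "G \<in> set generator_coeffs"
  shows "vec_of G \<in> cspan weight10_generators"
proof -
  have Lop_basis: "vec_of (hpow_mode_coeffs 2 (n + 1) l) = (\<lambda>b. 2 * Lop n (basis_vec (mset l)) b)" for n l
    by (simp add: Lop_def hpow_mode_basis_vec)
  consider (wt9) l where "l \<in> set (even_partitions 9)" "G = hpow_mode_coeffs 2 0 l"
    | (wt7) l where "l \<in> set [[1,1,1,1,1,2], [1,2,2,2], [1,1,2,3], [1,1,1,4], [3,4], [2,5]]"
                     "G = hpow_mode_coeffs 2 (-2) l"
    | (X) "G = hpow_mode_coeffs 4 (-3) [1,1,1,1]"
    | (Y) "G = (lin_coeffs (hpow_mode_coeffs 2 (-1)) ^^ 5) [([], 1)]"
    using assms unfolding generator_coeffs_def by auto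
  then show ?thesis
  proof cases
    case wt9
    then have "Lop (-1) (basis_vec (mset l)) \<in> weight10_generators"
      using basis_vec_even_partition by (auto simp: weight10_generators_def)
    then show ?thesis using Lop_basis[of "-1" l] wt9(2) by (simp add: cspan_scale_mem)
  next
    case wt7
    then have "basis_vec (mset l) \<in> M1plus_wt 7"
      using homogeneous_basis_vec[of "mset l"] by (auto simp: M1plus_wt_iff_homogeneous wt_def)
    then have "Lop (-3) (basis_vec (mset l)) \<in> weight10_generators"
      by (auto simp: weight10_generators_def)
    then show ?thesis using Lop_basis[of "-3" l] wt7(2) by (simp add: cspan_scale_mem)
  next
    case X
    have "vec_of G = hpow_mode 4 (-3) (basis_vec {#1,1,1,1#})"
      using hpow_mode_basis_vec[of 4 "-3" "[1,1,1,1]"] by (simp add: X)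
    then show ?thesis by (simp add: cspan_superset weight10_generators_def)
  next
    case Y
    have "vec_of G = (\<lambda>b. 32 * (Lop (-2) ^^ 5) vacuum b)"
      by (simp add: Y Lop_pow_vacuum fun_eq_iff power_divide)
    then show ?thesis by (simp add: cspan_scale_mem weight10_generators_def)
  qed
qed

definition coordinate_matrix :: "int list list" where
  "coordinate_matrix = map (\<lambda>p. map (\<lambda>G. coord G p) generator_coeffs) (even_partitions 10)"

text \<open>Found by exact Gaussian elimination: row q combines the generators into 73728 times the
  q-th monomial of even_partitions 10.\<close>

definition certificate :: "int list list" where
  "certificate =
   [[103680,1935360,4193280,7549440,-3363840,39260160,967680,19699200,-5898240,-10437120,983040,16796160,-43015680,2750976,1797120,-22648320,-41886720,9123840,38430720,-21427200,-840960,73728],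
    [9612,-6048,-105840,-209160,-367920,-786240,-498960,-627480,0,-52920,0,-219240,-309960,-158760,-93744,627480,1466640,393120,574560,317520,8820,0],
    [2520,1728,30240,59760,105120,224640,142560,179280,0,15120,0,62640,88560,45360,26784,-179280,-419040,-112320,-164160,-90720,-2520,0],
    [1260,19296,15120,29880,52560,112320,71280,89640,0,7560,0,31320,44280,22680,-5040,-89640,-209520,-56160,-82080,-45360,-1260,0],
    [-1008,-8064,-12096,-23904,-42048,-89856,-57024,-71712,0,-6048,0,-25056,-35424,-18144,4032,71712,167616,44928,65664,36288,1008,0],
    [-2304,-18432,-9216,26112,-3072,73728,9216,78336,0,-13824,0,-4608,-10752,-4608,9216,-78336,-175104,-36864,18432,9216,2304,0],
    [1908,15264,22896,4872,33072,30528,38160,14616,0,11448,0,21096,31944,15912,-7632,-14616,-38160,-15264,-58464,-31824,-1908,0],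
    [225,1800,2700,-1686,10044,-5616,4500,-5058,0,1350,0,-990,-870,-558,-900,5058,4716,-1800,1800,1116,-225,0],
    [-3816,-30528,-45792,2544,-66144,-61056,-76320,-29232,0,-22896,0,-42192,-63888,-31824,15264,29232,76320,30528,116928,63648,3816,0],
    [-450,-3600,-5400,3372,-7800,11232,-9000,10116,0,-2700,0,1980,1740,1116,1800,-10116,-9432,3600,-3600,-2232,450,0],
    [225,1800,2700,-7830,3900,-24048,4500,-23490,0,1350,0,-990,-870,-558,-900,23490,41580,-1800,1800,1116,-225,0],
    [36,288,432,10216,624,37440,13008,30648,0,216,0,9672,12968,6792,-144,-30648,-62160,-288,-24288,-13584,-36,0],
    [900,7200,10800,-600,15600,14400,18000,-1800,0,5400,0,-3960,-3480,-2232,-3600,1800,-18000,-7200,7200,4464,-900,0],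
    [-504,-4032,-6048,336,-8736,-8064,-10080,1008,0,-3024,0,-12528,-17712,-9072,2016,-1008,10080,4032,32832,18144,504,0],
    [1116,8928,13392,-744,19344,17856,22320,6984,18432,6696,-3072,54072,74328,38520,-4464,2232,-22320,-8928,-138528,-77040,-1116,0],
    [-9,-72,-108,6,-156,-144,-180,18,0,4554,0,-882,342,-162,36,-18,180,72,-72,324,9,0],
    [-1584,-12672,-19008,1056,-27456,-25344,-31680,40032,0,-9504,0,65952,84768,45216,6336,-3168,31680,12672,-160128,-90432,1584,0],
    [792,6336,9504,-528,13728,12672,15840,-20016,0,4752,6144,-32976,-42384,-22608,-3168,1584,-15840,-6336,80064,45216,-792,0],
    [72,576,864,-48,1248,1152,1440,-144,0,432,0,7056,-2736,1296,-288,144,-1440,-576,576,-2592,-72,0],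
    [-252,-2016,-3024,168,-4368,-4032,-5040,504,0,-1512,0,-6264,9576,-4536,1008,-504,5040,2016,-2016,9072,252,0],
    [504,4032,6048,-336,8736,8064,10080,-1008,0,3024,0,12528,-6864,9072,-2016,1008,-10080,-4032,4032,-18144,-504,0],
    [-630,-5040,-7560,420,-10920,-10080,-12600,1260,0,-3780,0,-15660,8580,-2124,2520,-1260,12600,5040,-5040,22680,630,0]]"

lemma certificate_correct:
  "map (\<lambda>c. map (\<lambda>m. sum_list (map2 (*) c m)) coordinate_matrix) certificate
   = map (\<lambda>q. map (\<lambda>j. if j = q then 73728 else 0) [0..<22]) [0..<22]"
  by code_simp

lemma certificate_dimensions:
  "length (even_partitions 10) = 22" "distinct (even_partitions 10)"
  "length certificate = 22" "\<forall>c\<in>set certificate. length c = 22"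
  "length (even_partitions 9) = 14"
  by code_simp+

lemma generator_coeffs_supported: "\<forall>G\<in>set generator_coeffs. fst ` set G \<subseteq> set (even_partitions 10)"
  by code_simp

lemma length_generator_coeffs: "length generator_coeffs = 22"
  using certificate_dimensions(5) by (simp add: generator_coeffs_def)

lemma sum_list_map2_times:
  "length xs = n \<Longrightarrow> length ys = n \<Longrightarrow> sum_list (map2 (*) xs ys) = (\<Sum>i<n. xs ! i * ys ! i)"
  by (simp add: sum_list_sum_nth atLeast0LessThan)

lemma certificate_left_inverse:
  assumes "q < 22" "j < 22"
  shows "(\<Sum>i<22. certificate ! q ! i * coordinate_matrix ! j ! i) = (if j = q then 73728 else 0)"
proof -
  have rows: "length (certificate ! q) = 22" "length (coordinate_matrix ! j) = 22"
    using assms certificate_dimensions length_generator_coeffs by (simp_all add: coordinate_matrix_def)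
  have "sum_list (map2 (*) (certificate ! q) (coordinate_matrix ! j)) = (if j = q then 73728 else 0)"
    using arg_cong[OF certificate_correct, of "\<lambda>xss. xss ! q ! j"] assms certificate_dimensions rows
    by (simp add: coordinate_matrix_def)
  with rows show ?thesis by (simp add: sum_list_map2_times)
qed

lemma vec_of_generator_coeffs:
  assumes "i < 22"
  shows "vec_of (generator_coeffs ! i)
         = (\<lambda>b. \<Sum>j<22. of_int (coordinate_matrix ! j ! i) * basis_vec (mset (even_partitions 10 ! j)) b)"
proof
  fix b
  have "fst ` set (generator_coeffs ! i) \<subseteq> set (even_partitions 10)"
    using generator_coeffs_supported length_generator_coeffs assms by simp
  with certificate_dimensions assms length_generator_coeffs
  show "vec_of (generator_coeffs ! i) b
        = (\<Sum>j<22. of_int (coordinate_matrix ! j ! i) * basis_vec (mset (even_partitions 10 ! j)) b)"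
    by (simp add: vec_of_expand coordinate_matrix_def)
qed

lemma basis_vec_weight10_in_cspan:
  assumes "q < 22"
  shows "basis_vec (mset (even_partitions 10 ! q)) \<in> cspan weight10_generators"
proof -
  have CM: "(\<Sum>i<22. of_int (certificate ! q ! i) * of_int (coordinate_matrix ! j ! i))
             = (if j = q then 73728 else (0 :: complex))" if "j < 22" for j
    using arg_cong[OF certificate_left_inverse[OF assms that], of "of_int :: int \<Rightarrow> complex"]
    by (simp split: if_splits)
  have "basis_vec (mset (even_partitions 10 ! q))
        = (\<lambda>b. \<Sum>i<22. of_int (certificate ! q ! i) / 73728 * vec_of (generator_coeffs ! i) b)"
    by (rule eq_sum_of_left_inverse[where n = 22 and D = 73728
          and M = "\<lambda>j i. of_int (coordinate_matrix ! j ! i)" and C = "\<lambda>q i. of_int (certificate ! q ! i)"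
          and g = "\<lambda>i. vec_of (generator_coeffs ! i)" and e = "\<lambda>j. basis_vec (mset (even_partitions 10 ! j))"])
       (simp_all add: vec_of_generator_coeffs CM assms)
  also have "\<dots> \<in> cspan weight10_generators"
    using generator_coeffs_in_cspan length_generator_coeffs by (intro cspan_lincomb) simp_all
  finally show ?thesis .
qed

theorem lemma4p3:
  shows "cspan (Lop (-1) ` M1plus_wt 9 \<union> Lop (-3) ` M1plus_wt 7
           \<union> {hpow_mode 4 (-3) (basis_vec {#1,1,1,1#}), (Lop (-2) ^^ 5) vacuum})
         = M1plus_wt 10"
  unfolding weight10_generators_def[symmetric]
proof (rule antisym)
  show "cspan weight10_generators \<subseteq> M1plus_wt 10"
    using weight10_generators_subset by (rule cspan_subset_M1plus_wt)
  show "M1plus_wt 10 \<subseteq> cspan weight10_generators"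
  proof (rule M1plus_wt_subset_cspan)
    fix a assume "0 \<notin># a" "wt a = 10" "even (size a)"
    then obtain l where "l \<in> set (even_partitions 10)" "mset l = a"
      using even_partition_exists by blast
    then obtain q where "q < 22" "a = mset (even_partitions 10 ! q)"
      using certificate_dimensions(1) by (metis in_set_conv_nth)
    then show "basis_vec a \<in> cspan weight10_generators"
      using basis_vec_weight10_in_cspan by simp
  qed
qed

end
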